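(* For $i=1,\dots,m$ let $k_i$ be a positive integer, $\mu_i>0$, $\alpha_i\neq 0$ a real constant, and $\bar x_i$ a real number. Define $\mathcal U_i(p_i)=1-\alpha_i p_i$ on the interval $P_i=\{p_i\in\mathbb R: \mathcal U_i(p_i)\in(0,1)\}$. For $u\in(0,1)$ let $f_i(u)$ denote the unique positive real root $y$ of $$F_i(y,u)=\sum_{j=0}^{k_i}\frac{1}{\mu_i^{j-1}}\left[\frac{j-uk_i}{j!}\right]y^{j}=0,$$ and, writing $y=f_i(u)$, $\rho=y/\mu_i$, $\pi_0=\left[\sum_{j=0}^{k_i}\rho^j/j!\right]^{-1}$ and $\pi_{k_i}=\pi_0\rho^{k_i}/k_i!$, define the rejection rate $g_i(p_i)=f_i(\mathcal U_i(p_i))\cdot \pi_{k_i}$ for $p_i\in P_i$. Then the optimization problem $$\text{maximize}_{\mathbf p}\ \ \mathcal U(\mathbf p)\quad\text{subject to}\quad g_i(p_i)\le \bar x_i,\ i=1,\dots,m,$$ where $\mathcal U(\mathbf p)=(\mathcal U_1(p_1),\dots,\mathcal U_m(p_m))$ and $\mathbf p=(p_1,\dots,p_m)\in P_1\times\cdots\times P_m$, is a convex optimization problem; that is, the objective is affine (hence concave) in $\mathbf p$ and each constraint function $g_i$ is convex in $p_i$ on $P_i$.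
   Context: Each block-face $i$ is modeled as a multi-server loss queue with $k_i$ servers (parking spaces), per-server service rate $\mu_i$, total arrival rate $y$, and stationary probabilities $\pi_j=\pi_0\rho^j/j!$ ($j=0,\dots,k_i$) of $j$ busy servers, where $\rho=y/\mu_i$. The occupancy is $u=\frac{y}{k_i\mu_i}(1-\pi_{k_i})$; for $u\in(0,1)$ the total arrival rate $y$ producing occupancy $u$ is the unique positive root $f_i(u)$ of $F_i(y,u)=0$. Price $p_i$ determines occupancy through the linear demand model $\mathcal U_i(p_i)=1-\alpha_i p_i$, and $g_i(p_i)$ is the rate at which vehicles are rejected by (find no space at) block-face $i$. *)

theory Defs
  imports "HOL-Analysis.Analysis"
begin

definition occ :: "real \<Rightarrow> real \<Rightarrow> real" where
  "occ alpha p = 1 - alpha * p"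

definition price_dom :: "real \<Rightarrow> real set" where
  "price_dom alpha = {p. 0 < occ alpha p \<and> occ alpha p < 1}"

definition Fpoly :: "nat \<Rightarrow> real \<Rightarrow> real \<Rightarrow> real \<Rightarrow> real" where
  "Fpoly k mu y u =
     (\<Sum>j = 0..k. (1 / (mu powi (int j - 1))) * ((real j - u * real k) / fact j) * y ^ j)"

definition froot :: "nat \<Rightarrow> real \<Rightarrow> real \<Rightarrow> real" where
  "froot k mu u = (THE y. y > 0 \<and> Fpoly k mu y u = 0)"

definition erlang_block :: "nat \<Rightarrow> real \<Rightarrow> real" where
  "erlang_block k rho = (1 / (\<Sum>j = 0..k. rho ^ j / fact j)) * rho ^ k / fact k"

definition rej_rate :: "nat \<Rightarrow> real \<Rightarrow> real \<Rightarrow> real \<Rightarrow> real" where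
  "rej_rate k mu alpha p =
     (let y = froot k mu (occ alpha p) in y * erlang_block k (y / mu))"

end

theory Submission
  imports Defs
begin

text \<open>Write \<open>B(k, \<rho>)\<close> for the Erlang blocking probability and \<open>c(\<rho>) = \<rho> (1 - B(k, \<rho>))\<close> for the
  carried load. Substituting \<open>y = \<mu> \<rho>\<close> turns \<open>F(y, u) = 0\<close> into \<open>c(\<rho>) = k u\<close>, so
  \<open>f(u) = \<mu> c\<^sup>-\<^sup>1(k u)\<close> and \<open>g(p) = \<mu> (c\<^sup>-\<^sup>1(k U(p)) - k U(p))\<close>. The function \<open>s \<mapsto> B(k, 1/s)\<close> is
  convex on \<open>s > 0\<close>: its second derivative is \<open>h Q / s\<^sup>4\<close> for a quadratic \<open>Q\<close> in \<open>h = B(k, 1/s)\<close>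
  whose nonnegativity propagates along the Erlang recursion. Hence \<open>c\<close>, being \<open>\<rho>\<close> minus a
  perspective of that function, is concave; it tends to \<open>k\<close>, so it is strictly increasing, and
  its inverse is convex. Composing with the affine occupancy gives convexity of \<open>g\<close>; the rest
  is convexity of intersections of preimages.\<close>

text \<open>\<open>erlang_recip n s = B(n, 1/s)\<close>, via the recursion
  \<open>B(n, \<rho>) = \<rho> B(n - 1, \<rho>) / (n + \<rho> B(n - 1, \<rho>))\<close>.\<close>

primrec erlang_recip :: "nat \<Rightarrow> real \<Rightarrow> real" where
  "erlang_recip 0 s = 1"
| "erlang_recip (Suc n) s = erlang_recip n s / (real (Suc n) * s + erlang_recip n s)"

lemma erlang_recip_bounds: "s \<ge> 0 \<Longrightarrow> 0 < erlang_recip n s \<and> erlang_recip n s \<le> 1"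
proof (induction n)
  case (Suc n)
  then have "0 < erlang_recip n s" "erlang_recip n s \<le> 1" "real (Suc n) * s \<ge> 0" by auto
  then show ?case by (auto simp: divide_simps)
qed simp

lemma erlang_recip_ge: "s \<ge> 0 \<Longrightarrow> 1 - real n * s \<le> erlang_recip n s"
proof (induction n)
  case (Suc n)
  define h where "h = erlang_recip n s"
  define K where "K = real (Suc n)"
  have h: "0 < h" using erlang_recip_bounds Suc.prems h_def by blast
  have Ks: "K * s \<ge> 0" using Suc.prems K_def by simp
  have "h \<ge> 1 - K * s" using Suc h_def K_def by (simp add: algebra_simps)
  then have "K * s * (h - (1 - K * s)) \<ge> 0" using Ks by simp
  moreover have "h - (1 - K * s) * (K * s + h) = K * s * (h - (1 - K * s))"
    by (simp add: algebra_simps)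
  ultimately have "(1 - K * s) * (K * s + h) \<le> h" by linarith
  then show ?case using h Ks by (simp add: h_def K_def divide_simps)
qed simp

lemma exp_partial_sum_pos: "x \<ge> 0 \<Longrightarrow> (\<Sum>j = 0..n. x ^ j / fact j) > (0 :: real)"
  by (induction n) (auto simp: add_pos_nonneg)

lemma erlang_block_eq_erlang_recip:
  assumes r: "r > 0"
  shows "erlang_block n r = erlang_recip n (1 / r)"
proof -
  have "erlang_recip n (1 / r) = (r ^ n / fact n) / (\<Sum>j = 0..n. r ^ j / fact j)"
  proof (induction n)
    case (Suc n)
    define S where "S = (\<Sum>j = 0..n. r ^ j / fact j)"
    define T where "T = r ^ n / fact n"
    define K where "K = real (Suc n)"
    have pos: "S > 0" "T > 0" "K > 0"
      using r exp_partial_sum_pos by (auto simp: S_def T_def K_def)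
    have "erlang_recip (Suc n) (1 / r) = (T / S) / (K * (1 / r) + T / S)"
      using Suc by (simp add: S_def T_def K_def)
    also have "\<dots> = (r * T / K) / (S + r * T / K)"
      using pos r by (simp add: field_simps)
    also have "r * T / K = r ^ Suc n / fact (Suc n)"
      by (simp add: T_def K_def field_simps)
    finally show ?case by (simp add: S_def)
  qed simp
  then show ?thesis by (simp add: erlang_block_def)
qed

definition erlang_recip_deriv :: "nat \<Rightarrow> real \<Rightarrow> real" where
  "erlang_recip_deriv n s =
     ((1 - real n * s) * erlang_recip n s - (erlang_recip n s)\<^sup>2) / s\<^sup>2"

lemma erlang_recip_deriv_Suc:
  fixes K s h h' :: real
  assumes s: "s > 0" and h: "h > 0" and K: "K > 0"
    and h': "h' = ((1 - (K - 1) * s) * h - h\<^sup>2) / s\<^sup>2"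
  defines "d \<equiv> K * s + h"
  shows "(h' * d - h * (K + h')) / d\<^sup>2 = ((1 - K * s) * (h / d) - (h / d)\<^sup>2) / s\<^sup>2"
proof -
  have d: "d > 0" using s h K by (simp add: d_def add_pos_pos)
  have "s * h' - h = h * (1 - K * s - h) / s"
    using s by (simp add: h' field_simps power2_eq_square)
  then have "h' * d - h * (K + h') = K * h * (1 - K * s - h) / s"
    by (simp add: d_def field_simps)
  also have "\<dots> = ((1 - K * s) * h * d - h\<^sup>2) / s\<^sup>2"
    using s by (simp add: d_def field_simps power2_eq_square)
  finally have "(h' * d - h * (K + h')) / d\<^sup>2 = ((1 - K * s) * h * d - h\<^sup>2) / (s\<^sup>2 * d\<^sup>2)"
    by simp
  also have "\<dots> = ((1 - K * s) * (h / d) - (h / d)\<^sup>2) / s\<^sup>2"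
    using d by (simp add: diff_divide_distrib power2_eq_square mult_ac)
  finally show ?thesis .
qed

lemma has_real_derivative_erlang_recip:
  "s > 0 \<Longrightarrow> (erlang_recip n has_real_derivative erlang_recip_deriv n s) (at s)"
proof (induction n)
  case 0
  then show ?case by (simp add: erlang_recip_deriv_def)
next
  case (Suc n)
  define K where "K = real (Suc n)"
  have h: "erlang_recip n s > 0" using erlang_recip_bounds Suc.prems by simp
  have "K * s > 0" using Suc.prems by (simp add: K_def)
  then have ne: "K * s + erlang_recip n s \<noteq> 0" using h by linarith
  have "((\<lambda>s. erlang_recip n s / (K * s + erlang_recip n s)) has_real_derivative
      (erlang_recip_deriv n s * (K * s + erlang_recip n s)
         - erlang_recip n s * (K + erlang_recip_deriv n s)) / (K * s + erlang_recip n s)\<^sup>2) (at s)"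
    by (rule derivative_eq_intros Suc.IH[OF Suc.prems] refl | use ne in \<open>simp add: power2_eq_square\<close>)+
  moreover have "erlang_recip_deriv n s = ((1 - (K - 1) * s) * erlang_recip n s - (erlang_recip n s)\<^sup>2) / s\<^sup>2"
    by (simp add: erlang_recip_deriv_def K_def)
  moreover have "erlang_recip (Suc n) = (\<lambda>s. erlang_recip n s / (K * s + erlang_recip n s))"
    by (simp add: fun_eq_iff K_def)
  ultimately show ?case
    using erlang_recip_deriv_Suc[OF Suc.prems h, of K] by (simp add: K_def erlang_recip_deriv_def)
qed

text \<open>For \<open>x = erlang_recip n s\<close>, the second derivative of \<open>erlang_recip n\<close> at \<open>s\<close> is
  \<open>x * curv_poly n s x / s\<^sup>4\<close>.\<close>

definition curv_poly :: "real \<Rightarrow> real \<Rightarrow> real \<Rightarrow> real" where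
  "curv_poly K s x = 2 * x\<^sup>2 + ((3 * K + 2) * s - 3) * x + K * (K + 1) * s\<^sup>2 - 2 * (K + 1) * s + 1"

lemma has_real_derivative_erlang_recip_deriv:
  assumes s: "s > 0"
  shows "(erlang_recip_deriv n has_real_derivative
           erlang_recip n s * curv_poly (real n) s (erlang_recip n s) / s ^ 4) (at s)"
proof -
  have "s \<noteq> 0" using s by simp
  have "((\<lambda>s. ((1 - real n * s) * erlang_recip n s - (erlang_recip n s)\<^sup>2) / s\<^sup>2) has_real_derivative
      erlang_recip n s * curv_poly (real n) s (erlang_recip n s) / s ^ 4) (at s)"
    apply (rule derivative_eq_intros has_real_derivative_erlang_recip[OF s] refl)+
    using \<open>s \<noteq> 0\<close> apply (simp_all add: erlang_recip_deriv_def curv_poly_def field_simps power2_eq_square)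
    by algebra
  then show ?thesis by (simp add: erlang_recip_deriv_def[abs_def])
qed

lemma curv_poly_step_remainder_nonneg:
  fixes K s x :: real
  assumes x: "x > 0" and s: "s > 0" and lb: "x \<ge> 1 - (K - 1) * s"
    and q: "curv_poly (K - 1) s x \<ge> 0"
  defines "E \<equiv> (K + 1)\<^sup>2 * s\<^sup>2 - 2 * K * s + 1"
    and "C \<equiv> K * (K + 1)\<^sup>2 * s ^ 3 - (3 * K\<^sup>2 + K) * s\<^sup>2 + (3 * K - 1) * s - 1"
  shows "E * x + C \<ge> 0"
proof -
  \<comment> \<open>Complete the square in \<open>q\<close>: \<open>8 curv_poly (K - 1) s x = w\<^sup>2 - D\<close>; the claim is
    \<open>Z \<le> E * w\<close>, which follows from \<open>Z\<^sup>2 \<le> E\<^sup>2 * D \<le> (E * w)\<^sup>2\<close>.\<close>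
  define w where "w = 4 * x + (3 * K - 1) * s - 3"
  define D where "D = 1 + (6 - 2 * K) * s + (K + 1)\<^sup>2 * s\<^sup>2"
  define Z where "Z = E * ((3 * K - 1) * s - 3) - 4 * C"
  have w: "w \<ge> 0"
  proof (cases "(K - 3) * s \<le> 1")
    case True
    then show ?thesis using lb by (simp add: w_def algebra_simps)
  next
    case False
    then show ?thesis using x s by (simp add: w_def algebra_simps)
  qed
  have E: "E > 0"
  proof -
    have "E = ((K + 1) * s - 1)\<^sup>2 + 2 * s" by (simp add: E_def power2_eq_square algebra_simps)
    then show ?thesis using s by (smt (verit) zero_le_power2)
  qed
  have "8 * curv_poly (K - 1) s x = w\<^sup>2 - D"
    by (simp add: curv_poly_def w_def D_def power2_eq_square algebra_simps)
  then have "D \<le> w\<^sup>2" using q by linarith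
  have "E\<^sup>2 * D - Z\<^sup>2 = 32 * s ^ 3"
    by (simp add: E_def D_def Z_def C_def power2_eq_square power3_eq_cube algebra_simps)
  then have "Z\<^sup>2 \<le> E\<^sup>2 * D" using s by (smt (verit) zero_less_power)
  also have "\<dots> \<le> (E * w)\<^sup>2"
    using \<open>D \<le> w\<^sup>2\<close> by (simp add: power_mult_distrib mult_left_mono)
  finally have "Z\<^sup>2 \<le> (E * w)\<^sup>2" .
  then have "Z \<le> E * w"
    by (rule power2_le_imp_le) (use E w in auto)
  moreover have "E * x + C = (E * w - Z) / 4" by (simp add: w_def Z_def algebra_simps)
  ultimately show ?thesis by simp
qed

lemma curv_poly_step:
  fixes K s x :: real
  assumes x: "x > 0" and s: "s > 0" and K: "K \<ge> 1" and lb: "x \<ge> 1 - (K - 1) * s"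
    and q: "curv_poly (K - 1) s x \<ge> 0"
  shows "curv_poly K s (x / (K * s + x)) \<ge> 0"
proof -
  define d where "d = K * s + x"
  have d: "d > 0" using K s x by (simp add: d_def add_pos_pos)
  define E where "E = (K + 1)\<^sup>2 * s\<^sup>2 - 2 * K * s + 1"
  define C where "C = K * (K + 1)\<^sup>2 * s ^ 3 - (3 * K\<^sup>2 + K) * s\<^sup>2 + (3 * K - 1) * s - 1"
  have EC: "E * x + C \<ge> 0"
    using curv_poly_step_remainder_nonneg[OF x s lb q] by (simp add: E_def C_def)
  have "2 * d\<^sup>2 * curv_poly K s (x / d)
      = 2 * (2 * x\<^sup>2 + ((3 * K + 2) * s - 3) * x * d + (K * (K + 1) * s\<^sup>2 - 2 * (K + 1) * s + 1) * d\<^sup>2)"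
    using d by (simp add: curv_poly_def field_simps power2_eq_square)
  also have "\<dots> = K * s * (((K + 1) * s + 1) * curv_poly (K - 1) s x + (E * x + C))"
    by (simp add: curv_poly_def E_def C_def d_def algebra_simps power2_eq_square power3_eq_cube)
  also have "\<dots> \<ge> 0"
  proof -
    have "((K + 1) * s + 1) * curv_poly (K - 1) s x \<ge> 0" using K s q by simp
    then show ?thesis using K s EC by simp
  qed
  finally show ?thesis using d by (simp add: d_def zero_le_mult_iff)
qed

lemma curv_poly_erlang_recip_nonneg: "s > 0 \<Longrightarrow> curv_poly (real n) s (erlang_recip n s) \<ge> 0"
proof (induction n)
  case 0
  then show ?case by (simp add: curv_poly_def power2_eq_square)
next
  case (Suc n)
  have "erlang_recip n s > 0" using erlang_recip_bounds Suc.prems by simp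
  moreover have "erlang_recip n s \<ge> 1 - (real (Suc n) - 1) * s"
    using erlang_recip_ge[of s n] Suc.prems by simp
  ultimately show ?case using curv_poly_step[of "erlang_recip n s" s "real (Suc n)"] Suc by simp
qed

lemma convex_on_erlang_recip: "convex_on {0<..} (erlang_recip n)"
proof (rule f''_ge0_imp_convex)
  show "convex ({0<..} :: real set)" by simp
  show "\<And>s. s \<in> {0<..} \<Longrightarrow> 0 \<le> erlang_recip n s * curv_poly (real n) s (erlang_recip n s) / s ^ 4"
    using erlang_recip_bounds curv_poly_erlang_recip_nonneg by (simp add: less_imp_le)
qed (auto intro: has_real_derivative_erlang_recip has_real_derivative_erlang_recip_deriv)

lemma convex_on_cong:
  assumes "\<And>x. x \<in> S \<Longrightarrow> f x = g x"
  shows "convex_on S f \<longleftrightarrow> convex_on S g"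
  using assms convexD[of S] unfolding convex_on_def by (smt (verit))

lemma convex_on_perspective:
  fixes f :: "real \<Rightarrow> real"
  assumes f: "convex_on {0<..} f"
  shows "convex_on {0<..} (\<lambda>x. x * f (1 / x))"
proof (rule convex_onI)
  fix t x y :: real
  assume t: "0 < t" "t < 1" and x: "x \<in> {0<..}" and y: "y \<in> {0<..}"
  define z where "z = (1 - t) * x + t * y"
  have z: "z > 0" using t x y by (simp add: z_def add_pos_pos)
  \<comment> \<open>\<open>1 / z\<close> is the convex combination of \<open>1 / x\<close> and \<open>1 / y\<close> with weights
    \<open>1 - b\<close> and \<open>b\<close>, where \<open>z * (1 - b) = (1 - t) * x\<close> and \<open>z * b = t * y\<close>.\<close>
  define b where "b = t * y / z"
  have b: "0 \<le> b" "b \<le> 1" "z * b = t * y" "z * (1 - b) = (1 - t) * x"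
    using t x y z by (simp_all add: b_def z_def field_simps)
  have "z * ((1 - b) * (1 / x) + b * (1 / y)) = (z * (1 - b)) / x + (z * b) / y"
    by (simp add: algebra_simps)
  also have "\<dots> = 1" using b x y by simp
  finally have "(1 - b) * (1 / x) + b * (1 / y) = 1 / z"
    using z by (simp add: field_simps)
  then have "f (1 / z) \<le> (1 - b) * f (1 / x) + b * f (1 / y)"
    using convex_onD[OF f, of b "1 / x" "1 / y"] b x y by simp
  then have "z * f (1 / z) \<le> z * ((1 - b) * f (1 / x) + b * f (1 / y))"
    using z by (simp add: mult_left_mono)
  also have "\<dots> = z * (1 - b) * f (1 / x) + z * b * f (1 / y)"
    by (simp add: algebra_simps)
  also have "\<dots> = (1 - t) * (x * f (1 / x)) + t * (y * f (1 / y))"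
    by (simp only: b(3,4) mult.assoc)
  finally show "((1 - t) *\<^sub>R x + t *\<^sub>R y) * f (1 / ((1 - t) *\<^sub>R x + t *\<^sub>R y))
      \<le> (1 - t) * (x * f (1 / x)) + t * (y * f (1 / y))"
    by (simp add: z_def)
qed simp

lemma concave_on_imp_strict_mono_on:
  fixes f :: "real \<Rightarrow> real"
  assumes f: "concave_on {a<..} f" and up: "\<And>x. a < x \<Longrightarrow> \<exists>y>x. f x < f y"
  shows "strict_mono_on {a<..} f"
proof (rule strict_mono_onI, rule ccontr)
  fix x y
  assume x: "x \<in> {a<..}" and xy: "x < y" and "\<not> f x < f y"
  then have "f y \<le> f x" by simp
  \<comment> \<open>\<open>y\<close> lies between \<open>x\<close> and a point \<open>z\<close> with \<open>f y < f z\<close>, contradicting concavity.\<close>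
  obtain z where z: "y < z" "f y < f z" using up[of y] x xy by auto
  define t where "t = (y - x) / (z - x)"
  have t: "0 < t" "t < 1" using xy z by (auto simp: t_def field_simps)
  have "t * (z - x) = y - x" using xy z by (simp add: t_def)
  then have y_eq: "(1 - t) * x + t * z = y" by (simp add: algebra_simps)
  have "(1 - t) * f x + t * f z \<le> f y"
    using concave_onD[OF f, of t x z] t x xy z by (simp add: y_eq)
  moreover have "(1 - t) * f y \<le> (1 - t) * f x" and "t * f y < t * f z"
    using \<open>f y \<le> f x\<close> z t by simp_all
  ultimately show False by (simp add: algebra_simps)
qed

definition carried_load :: "nat \<Rightarrow> real \<Rightarrow> real" where
  "carried_load k r = r * (1 - erlang_block k r)"

lemma concave_on_carried_load: "concave_on {0<..} (carried_load k)"
proof -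
  have "concave_on {0<..} (\<lambda>r. r - r * erlang_recip k (1 / r))"
    by (intro concave_on_diff convex_on_perspective convex_on_erlang_recip) (simp add: concave_on_ident)
  moreover have "r * (1 - erlang_block k r) = r - r * erlang_recip k (1 / r)" if "r > 0" for r :: real
    using that by (simp add: erlang_block_eq_erlang_recip algebra_simps)
  ultimately show ?thesis
    unfolding concave_on_def carried_load_def by (subst convex_on_cong) auto
qed

lemma carried_load_Suc:
  assumes r: "r > 0"
  shows "carried_load (Suc m) r = real (Suc m) / (real (Suc m) / r + erlang_recip m (1 / r))"
proof -
  define K where "K = real (Suc m)"
  define h where "h = erlang_recip m (1 / r)"
  have d: "K / r + h > 0" using erlang_recip_bounds[of "1 / r" m] r by (simp add: K_def h_def add_pos_pos)
  have "carried_load (Suc m) r = r * (1 - h / (K / r + h))"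
    using r by (simp add: carried_load_def erlang_block_eq_erlang_recip K_def h_def)
  also have "1 - h / (K / r + h) = (K / r) / (K / r + h)"
  proof -
    have "(K / r) / (K / r + h) + h / (K / r + h) = 1"
      by (simp only: add_divide_distrib[symmetric]) (use d in simp)
    then show ?thesis by linarith
  qed
  also have "r * ((K / r) / (K / r + h)) = (r * (K / r)) / (K / r + h)"
    by (simp only: times_divide_eq_right)
  also have "r * (K / r) = K" using r by simp
  finally show ?thesis by (simp add: K_def h_def)
qed

lemma carried_load_bounds:
  assumes k: "k > 0" and r: "r > 0"
  shows "real k * r / (r + real k) \<le> carried_load k r" "carried_load k r < real k"
    "carried_load k r \<le> r"
proof -
  obtain m where m: "k = Suc m" using k gr0_implies_Suc by blast
  define K where "K = real (Suc m)"
  define h where "h = erlang_recip m (1 / r)"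
  have cl: "carried_load k r = K / (K / r + h)" using carried_load_Suc[OF r] by (simp add: m K_def h_def)
  have h: "0 < h" "h \<le> 1" "1 - real m / r \<le> h"
    using erlang_recip_bounds[of "1 / r" m] erlang_recip_ge[of "1 / r" m] r by (simp_all add: h_def)
  have K: "K > 0" "K / r > 0" using r by (simp_all add: K_def)
  have "real k * r / (r + real k) = K / (K / r + 1)"
    using r by (simp add: m K_def field_simps)
  also have "\<dots> \<le> K / (K / r + h)"
    using h K by (intro divide_left_mono) auto
  finally show "real k * r / (r + real k) \<le> carried_load k r" by (simp add: cl)
  have "K / r = real m / r + 1 / r" by (simp add: K_def add_divide_distrib)
  then have "K / r + h \<ge> 1 + 1 / r" using h by linarith
  then have "K / r + h > 1" using r by (smt (verit) divide_pos_pos)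
  then have "K / (K / r + h) < K" using K by (simp add: divide_less_eq)
  then show "carried_load k r < real k" using cl by (simp add: m K_def)
  have "K / (K / r + h) \<le> K / (K / r)"
  proof (rule divide_left_mono)
    show "0 < (K / r + h) * (K / r)" using h K by (intro mult_pos_pos add_pos_pos)
  qed (use h K in auto)
  moreover have "K / (K / r) = r" using K r by simp
  ultimately show "carried_load k r \<le> r" using cl by linarith
qed

lemma carried_load_exceeds:
  assumes k: "k > 0" and v: "v < real k"
  shows "\<exists>r>R. v < carried_load k r"
proof -
  define r where "r = max (max R 0) (v * real k / (real k - v)) + 1"
  have r: "r > R" "r > 0" "r > v * real k / (real k - v)" by (auto simp: r_def)
  then have "v * real k < r * (real k - v)" using v by (simp add: divide_less_eq)
  then have "v < real k * r / (r + real k)" using r k by (simp add: field_simps)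
  then show ?thesis using carried_load_bounds(1)[OF k \<open>r > 0\<close>] r by (intro exI[of _ r]) auto
qed

lemma strict_mono_on_carried_load:
  assumes k: "k > 0"
  shows "strict_mono_on {0<..} (carried_load k)"
proof (rule concave_on_imp_strict_mono_on[OF concave_on_carried_load])
  fix x :: real
  assume "0 < x"
  then show "\<exists>y>x. carried_load k x < carried_load k y"
    using carried_load_exceeds[OF k carried_load_bounds(2)[OF k]] by blast
qed

lemma carried_load_surj:
  assumes k: "k > 0" and a: "0 < a" "a < real k"
  shows "\<exists>r>0. carried_load k r = a"
proof -
  obtain b where b: "b > a" "a < carried_load k b" using carried_load_exceeds[OF k a(2)] by blast
  have "continuous_on {a..b} (carried_load k)"
    unfolding carried_load_def erlang_block_def
    using a exp_partial_sum_pos[of _ k] by (intro continuous_intros) (auto simp: less_imp_neq[symmetric])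
  moreover have "carried_load k a \<le> a" using carried_load_bounds(3)[OF k a(1)] .
  ultimately obtain r where "a \<le> r" "carried_load k r = a"
    using IVT'[of "carried_load k" a a b] b by auto
  then show ?thesis using a by (intro exI[of _ r]) auto
qed

definition carried_load_inv :: "nat \<Rightarrow> real \<Rightarrow> real" where
  "carried_load_inv k a = (THE r. r > 0 \<and> carried_load k r = a)"

lemma carried_load_inv:
  assumes k: "k > 0" and a: "0 < a" "a < real k"
  shows "carried_load_inv k a > 0" "carried_load k (carried_load_inv k a) = a"
proof -
  have "inj_on (carried_load k) {0<..}"
    using strict_mono_on_carried_load[OF k] by (rule strict_mono_on_imp_inj_on)
  then have "\<exists>!r. r > 0 \<and> carried_load k r = a"
    using carried_load_surj[OF assms] by (auto dest: inj_onD)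
  from theI'[OF this] show "carried_load_inv k a > 0" "carried_load k (carried_load_inv k a) = a"
    by (simp_all add: carried_load_inv_def)
qed

lemma convex_on_right_inverse_of_concave:
  fixes f g :: "real \<Rightarrow> real"
  assumes f: "concave_on S f" "strict_mono_on S f" and T: "convex T"
    and g: "\<And>y. y \<in> T \<Longrightarrow> g y \<in> S \<and> f (g y) = y"
  shows "convex_on T g"
proof (rule convex_onI[OF _ T])
  fix t y1 y2 :: real
  assume t: "0 < t" "t < 1" and y: "y1 \<in> T" "y2 \<in> T"
  define x where "x = (1 - t) * g y1 + t * g y2"
  define y where "y = (1 - t) * y1 + t * y2"
  have "x \<in> S" "y \<in> T"
    using convexD_alt[OF concave_on_imp_convex[OF f(1)]] convexD_alt[OF T] g y t
    by (simp_all add: x_def y_def)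
  have "f (g y) \<le> f x"
    using concave_onD[OF f(1), of t "g y1" "g y2"] g y t \<open>y \<in> T\<close> by (simp add: x_def y_def)
  then have "g y \<le> x"
    using f(2) g \<open>x \<in> S\<close> \<open>y \<in> T\<close> by (meson not_le strict_mono_onD)
  then show "g ((1 - t) *\<^sub>R y1 + t *\<^sub>R y2) \<le> (1 - t) * g y1 + t * g y2"
    by (simp add: x_def y_def)
qed

lemma convex_on_carried_load_inv:
  assumes k: "k > 0"
  shows "convex_on {0<..<real k} (carried_load_inv k)"
  using concave_on_carried_load strict_mono_on_carried_load[OF k]
  by (rule convex_on_right_inverse_of_concave) (use carried_load_inv[OF k] in auto)

lemma sum_mult_power_div_fact:
  "(\<Sum>j = 0..n. real j * x ^ j / fact j) = x * ((\<Sum>j = 0..n. x ^ j / fact j) - x ^ n / fact n)"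
proof (induction n)
  case (Suc n)
  have "real (Suc n) * x ^ Suc n / fact (Suc n) = (real (Suc n) * (x * x ^ n)) / (real (Suc n) * fact n)"
    by simp
  also have "\<dots> = x * (x ^ n / fact n)"
    by (subst mult_divide_mult_cancel_left) simp_all
  finally have "real (Suc n) * x ^ Suc n / fact (Suc n) = x * (x ^ n / fact n)" .
  then show ?case using Suc by (simp add: algebra_simps)
qed simp

lemma Fpoly_scaled:
  assumes mu: "mu > 0" and r: "r > 0"
  shows "Fpoly k mu (mu * r) u = mu * (\<Sum>j = 0..k. r ^ j / fact j) * (carried_load k r - u * real k)"
proof -
  define S where "S = (\<Sum>j = 0..k. r ^ j / fact j)"
  define T where "T = r ^ k / fact k"
  have S: "S > 0" using exp_partial_sum_pos r by (simp add: S_def)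
  have "(1 / mu powi (int j - 1)) * ((real j - u * real k) / fact j) * (mu * r) ^ j
      = mu * (real j * r ^ j / fact j) - mu * u * real k * (r ^ j / fact j)" for j
    using mu by (simp add: power_int_diff power_mult_distrib field_simps)
  then have "Fpoly k mu (mu * r) u
      = mu * (\<Sum>j = 0..k. real j * r ^ j / fact j) - mu * u * real k * S"
    by (simp add: Fpoly_def S_def sum_subtractf sum_distrib_left)
  also have "\<dots> = mu * (r * (S - T)) - mu * u * real k * S"
    by (simp add: sum_mult_power_div_fact S_def T_def)
  also have "\<dots> = mu * S * (r * (1 - T / S) - u * real k)"
    using S by (simp add: field_simps)
  also have "r * (1 - T / S) = carried_load k r"
    by (simp add: carried_load_def erlang_block_def S_def T_def)
  finally show ?thesis by (simp add: S_def)
qed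

lemma froot_eq:
  assumes k: "k > 0" and mu: "mu > 0" and u: "0 < u" "u < 1"
  shows "froot k mu u = mu * carried_load_inv k (real k * u)"
proof -
  have a: "0 < real k * u" "real k * u < real k" using u k by auto
  note inv = carried_load_inv[OF k a]
  show ?thesis unfolding froot_def
  proof (rule the_equality)
    show "mu * carried_load_inv k (real k * u) > 0 \<and> Fpoly k mu (mu * carried_load_inv k (real k * u)) u = 0"
      using inv mu by (simp add: Fpoly_scaled)
  next
    fix y
    assume y: "y > 0 \<and> Fpoly k mu y u = 0"
    define r where "r = y / mu"
    have r: "r > 0" "y = mu * r" using y mu by (simp_all add: r_def)
    have "(\<Sum>j = 0..k. r ^ j / fact j) > 0" using exp_partial_sum_pos r by simp
    then have "carried_load k r = real k * u"
      using y mu Fpoly_scaled[OF mu r(1), of k u] by (simp add: r(2))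
    then show "y = mu * carried_load_inv k (real k * u)"
      using inj_onD[OF strict_mono_on_imp_inj_on[OF strict_mono_on_carried_load[OF k]],
          of r "carried_load_inv k (real k * u)"] inv r by simp
  qed
qed

lemma rej_rate_eq:
  assumes k: "k > 0" and mu: "mu > 0" and p: "p \<in> price_dom al"
  shows "rej_rate k mu al p = mu * (carried_load_inv k (real k * occ al p) - real k * occ al p)"
proof -
  have u: "0 < occ al p" "occ al p < 1" using p by (auto simp: price_dom_def)
  define a where "a = real k * occ al p"
  define r where "r = carried_load_inv k a"
  have "0 < a" "a < real k" using u k by (simp_all add: a_def)
  then have "carried_load k r = a" using carried_load_inv[OF k] by (simp add: r_def)
  then have "r * erlang_block k r = r - a" by (simp add: carried_load_def algebra_simps)
  moreover have "rej_rate k mu al p = mu * (r * erlang_block k r)"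
    using mu by (simp add: rej_rate_def Let_def froot_eq[OF k mu u] r_def a_def)
  ultimately show ?thesis by (simp add: r_def a_def)
qed

lemma convex_on_compose_affine:
  fixes f :: "real \<Rightarrow> real"
  assumes f: "convex_on T f" and S: "convex S" and ST: "\<And>x. x \<in> S \<Longrightarrow> c * x + d \<in> T"
  shows "convex_on S (\<lambda>x. f (c * x + d))"
proof (rule convex_onI[OF _ S])
  fix t x y :: real
  assume t: "0 < t" "t < 1" and xy: "x \<in> S" "y \<in> S"
  have "c * ((1 - t) * x + t * y) + d = (1 - t) * (c * x + d) + t * (c * y + d)"
    by (simp add: algebra_simps)
  then show "f (c * ((1 - t) *\<^sub>R x + t *\<^sub>R y) + d) \<le> (1 - t) * f (c * x + d) + t * f (c * y + d)"
    using convex_onD[OF f, of t "c * x + d" "c * y + d"] t xy ST by simp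
qed

lemma concave_on_occ_linear:
  assumes "linear l" and "convex S"
  shows "concave_on S (\<lambda>x. occ al (l x))"
proof -
  interpret l: linear l by fact
  show ?thesis
    using assms(2) by (auto simp: concave_on_iff occ_def l.add l.scale algebra_simps simp flip: distrib_right)
qed

lemma convex_price_dom: "convex (price_dom al)"
proof -
  have "price_dom al = {p. inner al p < 1} \<inter> {p. inner al p > 0}"
    by (auto simp: price_dom_def occ_def)
  then show ?thesis by (metis convex_Int convex_halfspace_lt convex_halfspace_gt)
qed

lemma convex_on_rej_rate:
  assumes k: "k > 0" and mu: "mu > 0"
  shows "convex_on (price_dom al) (rej_rate k mu al)"
proof -
  have aff: "(- real k * al) * p + real k = real k * occ al p" for p
    by (simp add: occ_def algebra_simps)
  have "convex_on (price_dom al) (\<lambda>p. carried_load_inv k (real k * occ al p))"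
    using convex_on_compose_affine[OF convex_on_carried_load_inv[OF k] convex_price_dom[of al],
        where c = "- real k * al" and d = "real k"] k
    unfolding aff by (simp add: price_dom_def)
  moreover have "concave_on (price_dom al) (\<lambda>p. real k * occ al p)"
    by (intro concave_on_cmul concave_on_occ_linear linear_ident convex_price_dom) simp
  ultimately have "convex_on (price_dom al)
      (\<lambda>p. mu * (carried_load_inv k (real k * occ al p) - real k * occ al p))"
    using mu by (intro convex_on_cmul convex_on_diff) auto
  then show ?thesis
    by (subst convex_on_cong) (auto simp: rej_rate_eq[OF k mu])
qed

lemma convex_sublevel_set: "convex_on S f \<Longrightarrow> convex {x \<in> S. f x \<le> c}"
  by (auto simp: convex_def convex_on_def intro: order_trans[OF convex_lower])

theorem theorem1:
  fixes k :: "'m::finite \<Rightarrow> nat"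
    and mu alpha xbar :: "'m \<Rightarrow> real"
  assumes "\<And>i. k i > 0"
    and "\<And>i. mu i > 0"
    and "\<And>i. alpha i \<noteq> 0"
  defines "D \<equiv> {p :: real ^ 'm. \<forall>i. p $ i \<in> price_dom (alpha i)}"
  shows "convex D
    \<and> (\<forall>i. concave_on D (\<lambda>p. occ (alpha i) (p $ i)))
    \<and> (\<forall>i. convex (price_dom (alpha i))
           \<and> convex_on (price_dom (alpha i)) (rej_rate (k i) (mu i) (alpha i)))
    \<and> convex {p \<in> D. \<forall>i. rej_rate (k i) (mu i) (alpha i) (p $ i) \<le> xbar i}"
proof -
  have nth: "linear (\<lambda>p :: real ^ 'm. p $ i)" for i
    using bounded_linear_vec_nth by (rule bounded_linear.linear)
  have rej: "convex_on (price_dom (alpha i)) (rej_rate (k i) (mu i) (alpha i))" for i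
    using convex_on_rej_rate assms(1,2) by blast
  have "convex (\<Inter>i. (\<lambda>p. p $ i) -` price_dom (alpha i))"
    by (intro convex_INT convex_linear_vimage nth convex_price_dom)
  moreover have "D = (\<Inter>i. (\<lambda>p. p $ i) -` price_dom (alpha i))"
    by (auto simp: D_def)
  ultimately have D: "convex D" by simp
  have "convex (\<Inter>i. (\<lambda>p. p $ i) -` {x \<in> price_dom (alpha i). rej_rate (k i) (mu i) (alpha i) x \<le> xbar i})"
    by (intro convex_INT convex_linear_vimage nth convex_sublevel_set rej)
  moreover have "{p \<in> D. \<forall>i. rej_rate (k i) (mu i) (alpha i) (p $ i) \<le> xbar i}
      = (\<Inter>i. (\<lambda>p. p $ i) -` {x \<in> price_dom (alpha i). rej_rate (k i) (mu i) (alpha i) x \<le> xbar i})"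
    by (auto simp: D_def)
  ultimately have "convex {p \<in> D. \<forall>i. rej_rate (k i) (mu i) (alpha i) (p $ i) \<le> xbar i}"
    by simp
  then show ?thesis
    using D rej concave_on_occ_linear[OF nth D] convex_price_dom by blast
qed

end
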